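(* Insert $2^k$ values one at a time into an initially empty black-white array (BWA). The chronological order in which the nodes of the BWA merge tree are realized is exactly the post-order traversal of that tree. Here a leaf is realized when its value is inserted, and an internal node is realized when the merge it represents is performed.
   Context: A black-white array (BWA) of size $N=2^K$ stores values from a totally ordered set. It has a white array $W[1..N-1]$ and a black array $B[1..N/2-1]$. For $i\ge0$, the segment of rank $i$ of either array is the index block $[2^i,2^{i+1}-1]$. A state variable $\mathtt{total}$ counts stored values and is initially $0$. The rank-$i$ segment is active iff bit $i$ of $\mathtt{total}$ is $1$. Insert$(v)$: if rank 0 is inactive, set $W[1]=v$; otherwise set $B[1]=v$ and perform $\mathrm{merge}(0)$. $\mathrm{merge}(i)$: merge the sorted white and black segments of rank $i$. The result goes into the white rank-$(i+1)$ segment if that segment is inactive. Otherwise it goes into the black rank-$(i+1)$ segment, followed by $\mathrm{merge}(i+1)$. When an insertion completes, $\mathtt{total}$ has increased by one. The BWA merge tree for $2^k$ insertions is the complete binary tree with $2^k$ leaves. Its leaves are the inserted values, from left to right in insertion order, and represent rank-0 segments. Each internal node at height $j$ represents the rank-$j$ segment produced by merging the two segments represented by its children. Post-order traversal visits the left subtree, then the right subtree, then the node. *)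

theory Defs
  imports Main
begin

text \<open>A segment stores pairs (value, insertion index); the index only serves
to identify which inserted values a segment contains (i.e. which tree node it is).\<close>

type_synonym 'a seg = "('a \<times> nat) list"

record 'a bwa =
  W :: "nat \<Rightarrow> 'a seg"
  Bl :: "nat \<Rightarrow> 'a seg"
  total :: nat
  rlog :: "nat set list"      \<comment> \<open>realization log: leaf-index set of each realized node\<close>

fun smerge :: "('a::linorder \<times> nat) list \<Rightarrow> ('a \<times> nat) list \<Rightarrow> ('a \<times> nat) list" where
  "smerge [] ys = ys"
| "smerge xs [] = xs"
| "smerge (x # xs) (y # ys) =
     (if fst x \<le> fst y then x # smerge xs (y # ys) else y # smerge (x # xs) ys)"

function merge_seg :: "nat \<Rightarrow> ('a::linorder) bwa \<Rightarrow> 'a bwa" where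
  "merge_seg i s =
     (let r = smerge (W s i) (Bl s i);
          s' = s\<lparr>rlog := rlog s @ [set (map snd r)]\<rparr>
      in if \<not> bit (total s) (Suc i) then s'\<lparr>W := (W s)(Suc i := r)\<rparr>
         else merge_seg (Suc i) (s'\<lparr>Bl := (Bl s)(Suc i := r)\<rparr>))"
  by pat_completeness auto
termination
proof (relation "measure (\<lambda>(i, s). total s - i)")
  fix i :: nat and s :: "'a bwa" and r s'
  assume "\<not> \<not> bit (total s) (Suc i)"
  then have "2 ^ Suc i \<le> total s"
    by (metis bit_iff_odd div_less even_zero not_le)
  moreover have "Suc i < 2 ^ Suc i" by (rule less_exp)
  ultimately show "((Suc i, s'\<lparr>Bl := (Bl s)(Suc i := r)\<rparr>), (i, s))
       \<in> measure (\<lambda>(i, s). total s - i)" if "s' = s\<lparr>rlog := rlog s @ [set (map snd r)]\<rparr>"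
    using that by simp
qed simp

definition bwa_insert :: "'a::linorder \<Rightarrow> 'a bwa \<Rightarrow> 'a bwa" where
  "bwa_insert v s =
     (let j = total s;
          s1 = s\<lparr>rlog := rlog s @ [{j}]\<rparr>;
          s2 = (if \<not> bit j 0 then s1\<lparr>W := (W s1)(0 := [(v, j)])\<rparr>
                else merge_seg 0 (s1\<lparr>Bl := (Bl s1)(0 := [(v, j)])\<rparr>))
      in s2\<lparr>total := Suc j\<rparr>)"

definition bwa_init :: "'a bwa" where
  "bwa_init = \<lparr>W = (\<lambda>_. []), Bl = (\<lambda>_. []), total = 0, rlog = []\<rparr>"

definition bwa_run :: "'a::linorder list \<Rightarrow> 'a bwa" where
  "bwa_run vs = fold bwa_insert vs bwa_init"

text \<open>BWA merge tree: leaves are insertion indices 0..2^k-1 left to right.\<close>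
datatype mtree = MLeaf nat | MNode mtree mtree

fun mk_tree :: "nat \<Rightarrow> nat \<Rightarrow> mtree" where
  "mk_tree 0 m = MLeaf m"
| "mk_tree (Suc j) m = MNode (mk_tree j (2 * m)) (mk_tree j (2 * m + 1))"

fun leaves :: "mtree \<Rightarrow> nat set" where
  "leaves (MLeaf i) = {i}"
| "leaves (MNode l r) = leaves l \<union> leaves r"

fun postorder :: "mtree \<Rightarrow> mtree list" where
  "postorder (MLeaf i) = [MLeaf i]"
| "postorder (MNode l r) = postorder l @ postorder r @ [MNode l r]"

end

theory Submission
  imports Defs
begin

(* The BWA is a binary counter on total. Inserting value number n (from 0) carries through
   the trailing one bits of n, and the merge at rank i joins the white segment of rank i with
   the carry, yielding the 2^(i+1) most recent insertion indices. So insertion n realizes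
   exactly the dyadic blocks {n+1-2^j ..< n+1} with 2^j dividing n+1: the leaf n followed,
   bottom-up, by the nodes of the merge tree whose rightmost leaf is n. Post-order lists each
   node directly after the lower nodes sharing its rightmost leaf, so it is the concatenation
   of these lists for n = 0, ..., 2^k - 1. *)

lemma pow2_dvd_Suc_iff_low_bits: "2 ^ j dvd Suc n \<longleftrightarrow> (\<forall>i<j. bit (n::nat) i)"
proof (induction j arbitrary: n)
  case 0
  show ?case by simp
next
  case (Suc j)
  show ?case
  proof (cases "odd n")
    case True
    then have carry: "Suc n = 2 * Suc (n div 2)" by presburger
    have "2 ^ Suc j dvd Suc n \<longleftrightarrow> 2 ^ j dvd Suc (n div 2)"
      by (simp only: carry power_Suc nat_mult_dvd_cancel_disj) simp
    moreover have "(\<forall>i<Suc j. bit n i) \<longleftrightarrow> (\<forall>i<j. bit (n div 2) i)"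
      using True by (auto simp: less_Suc_eq_0_disj bit_Suc bit_0)
    ultimately show ?thesis using Suc.IH by simp
  next
    case False
    then have "\<not> 2 ^ Suc j dvd Suc n"
      using dvd_trans[of 2 "2 ^ Suc j" "Suc n"] by auto
    then show ?thesis using False by (auto simp: bit_0)
  qed
qed

lemma bit_Suc_carry:
  assumes "\<forall>i<c. bit (n::nat) i" and "\<not> bit n c"
  shows "bit (Suc n) u \<longleftrightarrow> u = c \<or> c < u \<and> bit n u"
  using assms
proof (induction c arbitrary: n u)
  case 0
  then have "Suc n div 2 = n div 2" by (simp add: bit_0)
  then show ?case using 0 by (cases u) (auto simp: bit_Suc bit_0)
next
  case (Suc c)
  then have "odd n" by (auto simp: bit_0)
  then have "Suc n div 2 = Suc (n div 2)" by presburger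
  moreover have "\<forall>i<c. bit (n div 2) i" "\<not> bit (n div 2) c"
    using Suc.prems by (auto simp: bit_Suc)
  ultimately show ?case using Suc.IH \<open>odd n\<close> by (cases u) (auto simp: bit_Suc bit_0)
qed

definition dyadic_blocks_ending :: "nat \<Rightarrow> nat list \<Rightarrow> nat set list" where
  "dyadic_blocks_ending n js =
     map (\<lambda>j. {Suc n - 2 ^ j ..< Suc n}) (filter (\<lambda>j. 2 ^ j dvd Suc n) js)"

lemma dyadic_blocks_ending_upt_Cons:
  "dyadic_blocks_ending n [i..<Suc n] =
    (if 2 ^ i dvd Suc n then {Suc n - 2 ^ i ..< Suc n} # dyadic_blocks_ending n [Suc i..<Suc n]
     else [])"
proof (cases "i \<le> n")
  case True
  then have split: "[i..<Suc n] = i # [Suc i..<Suc n]" by (simp add: upt_conv_Cons)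
  have "filter (\<lambda>j. 2 ^ j dvd Suc n) [Suc i..<Suc n] = []" if "\<not> 2 ^ i dvd Suc n"
  proof (rule filter_False, intro ballI notI)
    fix j assume "j \<in> set [Suc i..<Suc n]" and "2 ^ j dvd Suc n"
    then have "(2::nat) ^ i dvd 2 ^ j" by (intro le_imp_power_dvd) auto
    with \<open>2 ^ j dvd Suc n\<close> that show False using dvd_trans by blast
  qed
  then show ?thesis
    unfolding dyadic_blocks_ending_def split by simp
next
  case False
  then have "Suc n < 2 ^ i" using less_exp[of i] by linarith
  then have "\<not> 2 ^ i dvd Suc n" using dvd_imp_le by fastforce
  then show ?thesis using False by (simp add: dyadic_blocks_ending_def)
qed

lemma filter_upt_bounded:
  assumes "\<And>j. P j \<Longrightarrow> j < a" and "a \<le> b"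
  shows "filter P [0..<b] = filter P [0..<a]"
  using assms(2)
proof (induction b)
  case (Suc b)
  show ?case
  proof (cases "a = Suc b")
    case False
    with Suc.prems have "a \<le> b" by simp
    with assms(1) have "\<not> P b" using leD by blast
    with Suc.IH \<open>a \<le> b\<close> show ?thesis by simp
  qed simp
qed simp

lemma dyadic_blocks_ending_upt_eq:
  assumes "Suc n \<le> 2 ^ k"
  shows "dyadic_blocks_ending n [0..<Suc k] = dyadic_blocks_ending n [0..<Suc n]"
proof -
  let ?P = "\<lambda>j. 2 ^ j dvd Suc n"
  have bound: "j < Suc (min k n)" if "?P j" for j
  proof -
    have "2 ^ j \<le> Suc n" using that by (simp add: dvd_imp_le)
    then have "(2::nat) ^ j \<le> 2 ^ k" and "j < Suc n"
      using assms less_exp[of j] by linarith+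
    then show ?thesis by simp
  qed
  have "filter ?P [0..<Suc k] = filter ?P [0..<Suc (min k n)]"
    using filter_upt_bounded[of ?P "Suc (min k n)" "Suc k"] bound by simp
  also have "\<dots> = filter ?P [0..<Suc n]"
    using filter_upt_bounded[of ?P "Suc (min k n)" "Suc n"] bound by simp
  finally show ?thesis unfolding dyadic_blocks_ending_def by (rule arg_cong)
qed

(* After n insertions an active white segment of rank u holds the 2^u insertions preceding
   the last n mod 2^u ones, which sit in lower ranks. *)
definition white_block :: "nat \<Rightarrow> nat \<Rightarrow> nat set" where
  "white_block n u = {n - n mod 2 ^ u - 2 ^ u ..< n - n mod 2 ^ u}"

definition white_invariant :: "nat \<Rightarrow> (nat \<Rightarrow> 'a seg) \<Rightarrow> bool" where
  "white_invariant n w \<longleftrightarrow> (\<forall>u. bit n u \<longrightarrow> snd ` set (w u) = white_block n u)"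

lemma mod_eq_minus_1_if_dvd_Suc:
  assumes "m dvd Suc n"
  shows "n mod m = m - 1"
proof -
  have "Suc n mod m = 0" using assms by simp
  then show ?thesis by (simp add: mod_Suc split: if_splits)
qed

lemma white_block_Suc_aligned:
  "2 ^ u dvd Suc n \<Longrightarrow> white_block (Suc n) u = {Suc n - 2 ^ u ..< Suc n}"
  by (simp add: white_block_def)

lemma white_block_Suc_unaligned:
  assumes "\<not> 2 ^ u dvd Suc n"
  shows "white_block (Suc n) u = white_block n u"
proof -
  have "Suc n mod 2 ^ u = Suc (n mod 2 ^ u)"
    using assms by (auto simp: mod_Suc dvd_eq_mod_eq_0 split: if_splits)
  then show ?thesis by (simp add: white_block_def)
qed

lemma white_block_union_carry:
  assumes "2 ^ Suc i dvd Suc n"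
  shows "white_block n i \<union> {Suc n - 2 ^ i ..< Suc n} = {Suc n - 2 ^ Suc i ..< Suc n}"
proof -
  have "2 ^ i dvd Suc n" by (rule dvd_trans[OF le_imp_power_dvd assms]) simp
  then have "n mod 2 ^ i = 2 ^ i - 1" by (rule mod_eq_minus_1_if_dvd_Suc)
  moreover have "2 ^ Suc i \<le> Suc n" using assms by (simp add: dvd_imp_le)
  ultimately show ?thesis by (auto simp: white_block_def)
qed

lemma white_invariant_Suc:
  assumes "white_invariant n w" and "\<forall>i<c. bit n i" and "\<not> bit n c"
    and "snd ` set r = {Suc n - 2 ^ c ..< Suc n}"
  shows "white_invariant (Suc n) (w(c := r))"
  unfolding white_invariant_def
proof (intro allI impI)
  fix u assume "bit (Suc n) u"
  then consider "u = c" | "c < u" "bit n u"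
    using bit_Suc_carry[OF assms(2,3)] by blast
  then show "snd ` set ((w(c := r)) u) = white_block (Suc n) u"
  proof cases
    case 1
    then show ?thesis
      using assms(2,4) white_block_Suc_aligned pow2_dvd_Suc_iff_low_bits by auto
  next
    case 2
    then have "\<not> 2 ^ u dvd Suc n" using assms(3) pow2_dvd_Suc_iff_low_bits by blast
    then show ?thesis
      using 2 assms(1) white_block_Suc_unaligned by (auto simp: white_invariant_def)
  qed
qed

lemma set_smerge: "set (smerge xs ys) = set xs \<union> set ys"
  by (induction xs ys rule: smerge.induct) auto

lemma merge_seg_carry_chain:
  assumes "total s = n" and "\<forall>u\<le>i. bit n u"
    and "snd ` set (Bl s i) = {Suc n - 2 ^ i ..< Suc n}"
    and "white_invariant n (W s)"
  shows "rlog (merge_seg i s) = rlog s @ dyadic_blocks_ending n [Suc i..<Suc n]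
    \<and> white_invariant (Suc n) (W (merge_seg i s))"
  using assms
proof (induction i s rule: merge_seg.induct)
  case (1 i s)
  define r where "r = smerge (W s i) (Bl s i)"
  have aligned: "2 ^ Suc i dvd Suc n"
    using "1.prems"(2) pow2_dvd_Suc_iff_low_bits less_Suc_eq_le by blast
  have r_block: "snd ` set r = {Suc n - 2 ^ Suc i ..< Suc n}"
    using "1.prems" white_block_union_carry[OF aligned]
    by (simp add: r_def set_smerge image_Un white_invariant_def)
  have blocks: "dyadic_blocks_ending n [Suc i..<Suc n] =
      {Suc n - 2 ^ Suc i ..< Suc n} # dyadic_blocks_ending n [Suc (Suc i)..<Suc n]"
    using aligned dyadic_blocks_ending_upt_Cons by simp
  show ?case
  proof (cases "bit n (Suc i)")
    case False
    then have step: "merge_seg i s = s\<lparr>rlog := rlog s @ [snd ` set r], W := (W s)(Suc i := r)\<rparr>"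
      using "1.prems"(1) by (simp add: r_def Let_def)
    have "\<not> 2 ^ Suc (Suc i) dvd Suc n"
      using False pow2_dvd_Suc_iff_low_bits by blast
    then have "dyadic_blocks_ending n [Suc (Suc i)..<Suc n] = []"
      using dyadic_blocks_ending_upt_Cons[of n "Suc (Suc i)"] by (simp del: upt_Suc)
    moreover have "\<forall>u<Suc i. bit n u" using "1.prems"(2) by auto
    ultimately show ?thesis
      unfolding step using blocks r_block white_invariant_Suc[OF "1.prems"(4) _ False r_block]
      by (simp add: fun_upd_def del: upt_Suc)
  next
    case True
    define s' where "s' = s\<lparr>rlog := rlog s @ [set (map snd r)]\<rparr>\<lparr>Bl := (Bl s)(Suc i := r)\<rparr>"
    have step: "merge_seg i s = merge_seg (Suc i) s'"
      using True "1.prems"(1) by (simp add: r_def s'_def Let_def)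
    have "\<forall>u\<le>Suc i. bit n u" using "1.prems"(2) True le_Suc_eq by auto
    then have "rlog (merge_seg (Suc i) s') = rlog s' @ dyadic_blocks_ending n [Suc (Suc i)..<Suc n]
      \<and> white_invariant (Suc n) (W (merge_seg (Suc i) s'))"
      unfolding s'_def using True "1.prems"(1,4) r_block by (intro "1.IH"[OF r_def refl]) simp_all
    then show ?thesis
      unfolding step using blocks r_block by (simp add: s'_def del: upt_Suc)
  qed
qed

lemma total_bwa_insert [simp]: "total (bwa_insert v s) = Suc (total s)"
  by (simp add: bwa_insert_def Let_def)

lemma bwa_insert_realizes:
  assumes "total s = n" and "white_invariant n (W s)"
  shows "rlog (bwa_insert v s) = rlog s @ dyadic_blocks_ending n [0..<Suc n]
    \<and> white_invariant (Suc n) (W (bwa_insert v s))"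
proof -
  have blocks: "dyadic_blocks_ending n [0..<Suc n] = {n} # dyadic_blocks_ending n [Suc 0..<Suc n]"
    using dyadic_blocks_ending_upt_Cons[of n 0] by (simp del: upt_Suc)
  show ?thesis
  proof (cases "bit n 0")
    case False
    then have step: "bwa_insert v s =
        s\<lparr>rlog := rlog s @ [{n}], W := (W s)(0 := [(v, n)]), total := Suc n\<rparr>"
      using assms(1) by (simp add: bwa_insert_def Let_def)
    have "\<not> 2 ^ Suc 0 dvd Suc n" using False pow2_dvd_Suc_iff_low_bits[of "Suc 0" n] by simp
    then have "dyadic_blocks_ending n [Suc 0..<Suc n] = []"
      using dyadic_blocks_ending_upt_Cons[of n "Suc 0"] by (simp del: upt_Suc)
    then show ?thesis
      unfolding step using blocks white_invariant_Suc[OF assms(2) _ False, of "[(v, n)]"]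
      by (simp add: fun_upd_def del: upt_Suc)
  next
    case True
    define s' where "s' = s\<lparr>rlog := rlog s @ [{n}]\<rparr>\<lparr>Bl := (Bl s)(0 := [(v, n)])\<rparr>"
    have step: "bwa_insert v s = (merge_seg 0 s')\<lparr>total := Suc n\<rparr>"
      using True assms(1) by (simp add: bwa_insert_def Let_def s'_def)
    have "rlog (merge_seg 0 s') = rlog s' @ dyadic_blocks_ending n [Suc 0..<Suc n]
        \<and> white_invariant (Suc n) (W (merge_seg 0 s'))"
      using merge_seg_carry_chain[of s' n 0] True assms by (simp add: s'_def)
    then show ?thesis
      unfolding step using blocks by (simp add: s'_def del: upt_Suc)
  qed
qed

lemma bwa_run_realizes:
  "total (bwa_run vs) = length vs \<and> white_invariant (length vs) (W (bwa_run vs))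
    \<and> rlog (bwa_run vs) = concat (map (\<lambda>n. dyadic_blocks_ending n [0..<Suc n]) [0..<length vs])"
proof (induction vs rule: rev_induct)
  case Nil
  show ?case by (simp add: bwa_run_def bwa_init_def white_invariant_def)
next
  case (snoc v vs)
  have "bwa_run (vs @ [v]) = bwa_insert v (bwa_run vs)" by (simp add: bwa_run_def)
  moreover have "[0..<length (vs @ [v])] = [0..<length vs] @ [length vs]" by simp
  ultimately show ?case
    using snoc bwa_insert_realizes[of "bwa_run vs" "length vs" v] by (simp del: upt_Suc)
qed

lemma leaves_mk_tree: "leaves (mk_tree j m) = {m * 2 ^ j ..< Suc m * 2 ^ j}"
proof (induction j arbitrary: m)
  case (Suc j)
  then show ?case by (auto simp: algebra_simps)
qed simp

lemma concat_map_append_last: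
  assumes "\<forall>x\<in>set xs. g x = []"
  shows "concat (map (\<lambda>x. f x @ g x) (xs @ [y])) = concat (map f (xs @ [y])) @ g y"
  using assms by (induction xs) auto

lemma postorder_mk_tree:
  "map leaves (postorder (mk_tree j m)) =
     concat (map (\<lambda>n. dyadic_blocks_ending n [0..<Suc j]) [m * 2 ^ j ..< Suc m * 2 ^ j])"
proof (induction j arbitrary: m)
  case 0
  then show ?case by (simp add: dyadic_blocks_ending_def)
next
  case (Suc j)
  define L :: nat where "L = 2 ^ j"
  define a where "a = m * (2 * L)"
  let ?f = "\<lambda>j n. dyadic_blocks_ending n [0..<Suc j]"
  have left: "map leaves (postorder (mk_tree j (2 * m))) = concat (map (?f j) [a..<a + L])"
    using Suc.IH[of "2 * m"] by (simp add: a_def L_def algebra_simps)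
  have right: "map leaves (postorder (mk_tree j (Suc (2 * m)))) =
      concat (map (?f j) [a + L..<a + L + L])"
    using Suc.IH[of "Suc (2 * m)"] by (simp add: a_def L_def algebra_simps)
  have "map leaves (postorder (mk_tree (Suc j) m)) =
      concat (map (?f j) [a..<a + L + L]) @ [{a..<a + L + L}]"
    using left right leaves_mk_tree[of "Suc j" m] upt_add_eq_append[of a "a + L" L]
    by (simp add: a_def L_def algebra_simps)
  moreover have "concat (map (?f (Suc j)) [a..<a + L + L]) =
      concat (map (?f j) [a..<a + L + L]) @ [{a..<a + L + L}]"
  proof -
    let ?g = "\<lambda>n. if 2 ^ Suc j dvd Suc n then [{Suc n - 2 ^ Suc j ..< Suc n}] else []"
    have f_Suc: "?f (Suc j) n = ?f j n @ ?g n" for n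
      by (simp add: dyadic_blocks_ending_def)
    have "L \<ge> 1" by (simp add: L_def)
    then have split: "[a..<a + L + L] = [a..<a + L + L - 1] @ [a + L + L - 1]"
      using upt_Suc_append[of a "a + L + L - 1"] by simp
    have "\<not> 2 ^ Suc j dvd Suc n" if "n \<in> set [a..<a + L + L - 1]" for n
    proof
      assume "2 ^ Suc j dvd Suc n"
      then obtain q where "Suc n = q * (2 * L)" by (auto simp: L_def elim!: dvdE)
      moreover have "m * (2 * L) < Suc n" and "Suc n < Suc m * (2 * L)"
        using that by (auto simp: a_def)
      ultimately have "m < q" and "q < Suc m" by (simp_all only: mult_less_cancel2)
      then show False by simp
    qed
    then have "\<forall>n\<in>set [a..<a + L + L - 1]. ?g n = []" by simp
    moreover have "2 ^ Suc j dvd Suc (a + L + L - 1)"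
      using \<open>L \<ge> 1\<close> by (simp add: a_def L_def)
    ultimately show ?thesis
      unfolding f_Suc split concat_map_append_last[OF \<open>\<forall>n\<in>_. ?g n = []\<close>]
      using \<open>L \<ge> 1\<close> by (simp add: L_def)
  qed
  moreover have "[m * 2 ^ Suc j ..< Suc m * 2 ^ Suc j] = [a..<a + L + L]"
    by (simp add: a_def L_def)
  ultimately show ?case by (simp only:)
qed

theorem mainTheorem5:
  fixes vs :: "'a::linorder list" and k :: nat
  assumes "length vs = 2 ^ k"
  shows "rlog (bwa_run vs) = map leaves (postorder (mk_tree k 0))"
proof -
  have "rlog (bwa_run vs) = concat (map (\<lambda>n. dyadic_blocks_ending n [0..<Suc n]) [0..<2 ^ k])"
    using bwa_run_realizes[of vs] assms by simp
  also have "\<dots> = concat (map (\<lambda>n. dyadic_blocks_ending n [0..<Suc k]) [0..<2 ^ k])"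
    using dyadic_blocks_ending_upt_eq by (intro arg_cong[where f = concat] map_cong) auto
  also have "\<dots> = map leaves (postorder (mk_tree k 0))"
    using postorder_mk_tree[of k 0] by simp
  finally show ?thesis .
qed

end
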